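(* Let $G$ be a graph that has a min-max clique covering with simple intersection, and suppose its compressed cliques graph $\mathcal{C}(G)$ has no induced cycles other than $K_3$ (i.e., no induced cycles of length at least $4$). Then $Z_+(G)=|V(G)|-\operatorname{cc}(G)$.
   Context: A clique covering of a graph is a set of cliques such that every edge lies in at least one of them; $\operatorname{cc}(G)$ is its minimum size. A min-max clique covering is a clique covering of size $\operatorname{cc}(G)$ consisting of maximal cliques; it has simple intersection if no three distinct cliques of it share a vertex. Given such a covering $\{C_1,\dots,C_\ell\}$, put $C_{i,j}=C_i\cap C_j$ ($i\ne j$) and $C_{i,i}=C_i\setminus\bigcup_{j\ne i}C_j$; the compressed cliques graph $\mathcal{C}(G)$ has a vertex $v_{i,j}$ for each non-empty $C_{i,j}$ (including $i=j$), with $v_{i,j}\sim v_{i',j'}$ iff $\{i,j\}\cap\{i',j'\}\ne\emptyset$. $Z_+(G)$ is the positive zero forcing number: the minimum size of a set $B$ of initially black vertices such that repeated application of the rule "let $W_1,\dots,W_k$ be the vertex sets of components of $G$ minus the black vertices; a black vertex $u$ whose only white neighbour in the subgraph induced by $W_i\cup(\text{black vertices})$ is $w$ may turn $w$ black" eventually makes all vertices black. *)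

theory Defs
  imports Main
begin

definition graph :: "'a set \<Rightarrow> ('a \<Rightarrow> 'a \<Rightarrow> bool) \<Rightarrow> bool" where
  "graph V E \<longleftrightarrow> finite V \<and> (\<forall>x y. E x y \<longrightarrow> E y x) \<and> (\<forall>x. \<not> E x x)
     \<and> (\<forall>x y. E x y \<longrightarrow> x \<in> V \<and> y \<in> V)"

definition clique :: "'a set \<Rightarrow> ('a \<Rightarrow> 'a \<Rightarrow> bool) \<Rightarrow> 'a set \<Rightarrow> bool" where
  "clique V E C \<longleftrightarrow> C \<subseteq> V \<and> (\<forall>x\<in>C. \<forall>y\<in>C. x \<noteq> y \<longrightarrow> E x y)"

definition maximal_clique :: "'a set \<Rightarrow> ('a \<Rightarrow> 'a \<Rightarrow> bool) \<Rightarrow> 'a set \<Rightarrow> bool" where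
  "maximal_clique V E C \<longleftrightarrow> clique V E C \<and> (\<forall>D. clique V E D \<and> C \<subseteq> D \<longrightarrow> D = C)"

definition clique_covering :: "'a set \<Rightarrow> ('a \<Rightarrow> 'a \<Rightarrow> bool) \<Rightarrow> 'a set set \<Rightarrow> bool" where
  "clique_covering V E \<K> \<longleftrightarrow> finite \<K> \<and> (\<forall>C\<in>\<K>. clique V E C)
     \<and> (\<forall>x y. E x y \<longrightarrow> (\<exists>C\<in>\<K>. x \<in> C \<and> y \<in> C))"

definition cc :: "'a set \<Rightarrow> ('a \<Rightarrow> 'a \<Rightarrow> bool) \<Rightarrow> nat" where
  "cc V E = (LEAST k. \<exists>\<K>. clique_covering V E \<K> \<and> card \<K> = k)"

definition min_max_clique_covering :: "'a set \<Rightarrow> ('a \<Rightarrow> 'a \<Rightarrow> bool) \<Rightarrow> 'a set set \<Rightarrow> bool" where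
  "min_max_clique_covering V E \<K> \<longleftrightarrow> clique_covering V E \<K> \<and> card \<K> = cc V E
     \<and> (\<forall>C\<in>\<K>. maximal_clique V E C)"

definition simple_intersection :: "'a set set \<Rightarrow> bool" where
  "simple_intersection \<K> \<longleftrightarrow> (\<forall>C1\<in>\<K>. \<forall>C2\<in>\<K>. \<forall>C3\<in>\<K>.
     C1 \<noteq> C2 \<and> C1 \<noteq> C3 \<and> C2 \<noteq> C3 \<longrightarrow> C1 \<inter> C2 \<inter> C3 = {})"

definition cpart :: "'a set set \<Rightarrow> 'a set \<Rightarrow> 'a set \<Rightarrow> 'a set" where
  "cpart \<K> C D = (if C = D then C - \<Union>(\<K> - {C}) else C \<inter> D)"

text \<open>Compressed cliques graph: vertices are the unordered pairs {C_i,C_j} (i = j allowed)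
  with C_{i,j} nonempty; two distinct such vertices are adjacent iff the index pairs meet.\<close>
definition ccg_vertices :: "'a set set \<Rightarrow> 'a set set set" where
  "ccg_vertices \<K> = {{C, D} | C D. C \<in> \<K> \<and> D \<in> \<K> \<and> cpart \<K> C D \<noteq> {}}"

definition ccg_edge :: "'a set set \<Rightarrow> 'a set set \<Rightarrow> 'a set set \<Rightarrow> bool" where
  "ccg_edge \<K> p q \<longleftrightarrow> p \<in> ccg_vertices \<K> \<and> q \<in> ccg_vertices \<K> \<and> p \<noteq> q \<and> p \<inter> q \<noteq> {}"

definition has_induced_cycle :: "'b set \<Rightarrow> ('b \<Rightarrow> 'b \<Rightarrow> bool) \<Rightarrow> nat \<Rightarrow> bool" where
  "has_induced_cycle V E k \<longleftrightarrow> (\<exists>xs. length xs = k \<and> distinct xs \<and> set xs \<subseteq> V \<and>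
     (\<forall>i<k. \<forall>j<k. i \<noteq> j \<longrightarrow>
        (E (xs ! i) (xs ! j) \<longleftrightarrow> (j = Suc i mod k \<or> i = Suc j mod k))))"

definition component_in :: "('a \<Rightarrow> 'a \<Rightarrow> bool) \<Rightarrow> 'a set \<Rightarrow> 'a \<Rightarrow> 'a set" where
  "component_in E S x = {y \<in> S. (\<lambda>a b. a \<in> S \<and> b \<in> S \<and> E a b)\<^sup>*\<^sup>* x y}"

definition psd_force_step :: "'a set \<Rightarrow> ('a \<Rightarrow> 'a \<Rightarrow> bool) \<Rightarrow> 'a set \<Rightarrow> 'a set \<Rightarrow> bool" where
  "psd_force_step V E B B' \<longleftrightarrow> (\<exists>u w. u \<in> B \<and> w \<in> V - B \<and>
     {x \<in> component_in E (V - B) w. E u x} = {w} \<and> B' = insert w B)"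

definition psd_forcing_set :: "'a set \<Rightarrow> ('a \<Rightarrow> 'a \<Rightarrow> bool) \<Rightarrow> 'a set \<Rightarrow> bool" where
  "psd_forcing_set V E B \<longleftrightarrow> B \<subseteq> V \<and> (psd_force_step V E)\<^sup>*\<^sup>* B V"

definition Zplus :: "'a set \<Rightarrow> ('a \<Rightarrow> 'a \<Rightarrow> bool) \<Rightarrow> nat" where
  "Zplus V E = (LEAST k. \<exists>B. psd_forcing_set V E B \<and> card B = k)"

end

theory Submission
  imports Defs "HOL-Library.Transitive_Closure_Table"
begin

text \<open>
  Lower bound: when u forces w, the clique of the covering containing the edge uw becomes entirely
  black, since any other white vertex of it would be a second white neighbour of u in the component
  of w. So every force completes a new clique of any clique covering, at most cc(G) vertices are
  forced, and Z_+(G) \<ge> |V(G)| - cc(G).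

  Upper bound: a cycle of length at least 4 in the intersection graph of the cliques would yield an
  induced cycle of the compressed cliques graph, so all its cycles are triangles. With maximality
  and simple intersection this allows ordering the cliques as C_1, ..., C_l so that C_j contains a
  vertex w_j lying in no earlier clique and a vertex u_j \<noteq> w_j lying in no later clique: a
  clique with a private vertex fits anywhere, one without needs an earlier and a later neighbour,
  which a greedy search order provides. Starting from V minus all w_j, each u_j forces w_j in turn.
\<close>

lemma successively_cyclic_nth:
  assumes "successively R xs" and "R (last xs) (hd xs)" and "i < length xs"
  shows "R (xs ! i) (xs ! (Suc i mod length xs))"
proof (cases "Suc i < length xs")
  case True
  with assms(1) show ?thesis by (simp add: successively_nth)
next
  case False
  with assms(3) have "i = length xs - 1" "xs \<noteq> []" by auto
  with assms(2) show ?thesis by (simp add: last_conv_nth hd_conv_nth)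
qed

lemma rtrancl_path_successively:
  "rtrancl_path r x xs y \<Longrightarrow> successively r (x # xs) \<and> last (x # xs) = y"
  by (induction rule: rtrancl_path.induct) (auto simp: successively_Cons)

lemma rtranclp_exit_step:
  "r\<^sup>*\<^sup>* a b \<Longrightarrow> a \<in> S \<Longrightarrow> b \<notin> S \<Longrightarrow> \<exists>x\<in>S. \<exists>y. y \<notin> S \<and> r x y"
  by (induction rule: rtranclp_induct) blast+

lemma card_insert_le_Suc: "card (insert x A) \<le> Suc (card A)"
  by (cases "finite A") (auto simp: card_insert_if)

lemma simple_intersectionD:
  "simple_intersection K \<Longrightarrow> C1 \<in> K \<Longrightarrow> C2 \<in> K \<Longrightarrow> C3 \<in> K \<Longrightarrow> x \<in> C1 \<Longrightarrow> x \<in> C2 \<Longrightarrow> x \<in> C3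
    \<Longrightarrow> C1 = C2 \<or> C1 = C3 \<or> C2 = C3"
  unfolding simple_intersection_def by blast

lemma clique_union_inter:
  assumes "clique V E C" "clique V E D1" "clique V E D2" "C \<subseteq> D1 \<union> D2"
  shows "clique V E (C \<union> (D1 \<inter> D2))"
  using assms unfolding clique_def by blast

lemma cc_le_card: "clique_covering V E K \<Longrightarrow> cc V E \<le> card K"
  unfolding cc_def by (rule Least_le) blast

lemma Zplus_eqI:
  assumes "psd_forcing_set V E B" and "card B = k"
    and "\<And>B'. psd_forcing_set V E B' \<Longrightarrow> k \<le> card B'"
  shows "Zplus V E = k"
  unfolding Zplus_def using assms by (intro Least_equality) blast+

lemma forced_clique_black:
  assumes "u \<in> B" and "w \<in> V - B" and forces: "{x \<in> component_in E (V - B) w. E u x} = {w}"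
    and D: "clique V E D" "u \<in> D" "w \<in> D"
  shows "D \<subseteq> insert w B"
proof
  fix x assume "x \<in> D"
  show "x \<in> insert w B"
  proof (rule ccontr)
    assume white: "x \<notin> insert w B"
    with assms \<open>x \<in> D\<close> have "x \<in> V - B" "E w x" "E u x" by (auto simp: clique_def)
    with \<open>w \<in> V - B\<close> have "x \<in> component_in E (V - B) w"
      unfolding component_in_def by (simp add: r_into_rtranclp)
    with \<open>E u x\<close> forces white show False by blast
  qed
qed

lemma black_cliques_of_forcing_run:
  assumes cov: "clique_covering V E K" and run: "(psd_force_step V E)\<^sup>*\<^sup>* B B'"
  shows "\<exists>U\<subseteq>K. \<Union>U \<subseteq> B' \<and> card B' \<le> card B + card U"
  using run
proof (induction rule: rtranclp_induct)
  case base
  show ?case by (intro exI[of _ "{}"]) auto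
next
  case (step B1 B2)
  then obtain U where U: "U \<subseteq> K" "\<Union>U \<subseteq> B1" "card B1 \<le> card B + card U" by blast
  from step.hyps(2) obtain u w where uw: "u \<in> B1" "w \<in> V - B1"
    and forces: "{x \<in> component_in E (V - B1) w. E u x} = {w}" and B2: "B2 = insert w B1"
    unfolding psd_force_step_def by blast
  from forces have "E u w" by blast
  with cov obtain D where D: "D \<in> K" "u \<in> D" "w \<in> D" unfolding clique_covering_def by blast
  with cov have "clique V E D" by (simp add: clique_covering_def)
  with D have "D \<subseteq> B2" using forced_clique_black[OF uw forces] B2 by blast
  moreover have "card B2 \<le> card B + card (insert D U)"
  proof -
    from U(1) cov have "finite U" using finite_subset by (auto simp: clique_covering_def)
    moreover from U(2) D(3) uw(2) have "D \<notin> U" by blast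
    ultimately show ?thesis using U(3) B2 card_insert_le_Suc[of w B1] by simp
  qed
  ultimately show ?case using U(1,2) D(1) B2 by (intro exI[of _ "insert D U"]) auto
qed

lemma card_le_forcing_set_plus_covering:
  assumes cov: "clique_covering V E K" and "psd_forcing_set V E B"
  shows "card V \<le> card B + card K"
proof -
  from assms(2) have "(psd_force_step V E)\<^sup>*\<^sup>* B V" by (simp add: psd_forcing_set_def)
  then obtain U where U: "U \<subseteq> K" "card V \<le> card B + card U"
    by (metis black_cliques_of_forcing_run[OF cov])
  from cov have "finite K" by (simp add: clique_covering_def)
  with U(1) have "card U \<le> card K" by (rule card_mono[rotated])
  with U(2) show ?thesis by linarith
qed

definition placeable :: "'a set set \<Rightarrow> 'a set set \<Rightarrow> 'a set \<Rightarrow> bool" where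
  "placeable K S C \<longleftrightarrow> (\<exists>u\<in>C. \<exists>w\<in>C. u \<noteq> w \<and> w \<notin> \<Union>S \<and> (\<forall>D\<in>K. u \<in> D \<longrightarrow> D = C \<or> D \<in> S))"

lemma placeableI:
  "u \<in> C \<Longrightarrow> w \<in> C \<Longrightarrow> u \<noteq> w \<Longrightarrow> w \<notin> \<Union>S \<Longrightarrow> (\<And>D. D \<in> K \<Longrightarrow> u \<in> D \<Longrightarrow> D = C \<or> D \<in> S)
    \<Longrightarrow> placeable K S C"
  unfolding placeable_def by blast

locale placement_chain =
  fixes V :: "'a set" and E :: "'a \<Rightarrow> 'a \<Rightarrow> bool" and K :: "'a set set"
    and cs :: "'a set list" and u w :: "nat \<Rightarrow> 'a"
  assumes covering: "clique_covering V E K"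
    and set_cs: "set cs = K"
    and u_mem: "i < length cs \<Longrightarrow> u i \<in> cs ! i"
    and w_mem: "i < length cs \<Longrightarrow> w i \<in> cs ! i"
    and u_ne_w: "i < length cs \<Longrightarrow> u i \<noteq> w i"
    and w_fresh: "i < length cs \<Longrightarrow> w i \<notin> \<Union>(set (take i cs))"
    and u_cliques: "i < length cs \<Longrightarrow> D \<in> K \<Longrightarrow> u i \<in> D \<Longrightarrow> D = cs ! i \<or> D \<in> set (take i cs)"
begin

definition blacks :: "nat \<Rightarrow> 'a set" where
  "blacks j = V - w ` {j..<length cs}"

lemma clique_nth: "i < length cs \<Longrightarrow> clique V E (cs ! i)"
  using covering set_cs nth_mem unfolding clique_covering_def by blast

lemma mem_V: "i < length cs \<Longrightarrow> x \<in> cs ! i \<Longrightarrow> x \<in> V"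
  using clique_nth unfolding clique_def by blast

lemma w_notin_earlier:
  assumes "i < m" "m < length cs" shows "w m \<notin> cs ! i"
proof -
  from assms have "cs ! i \<in> set (take m cs)" by (simp add: in_set_conv_nth) (metis nth_take)
  then show ?thesis using w_fresh[OF assms(2)] by blast
qed

lemma w_inj: "i < length cs \<Longrightarrow> m < length cs \<Longrightarrow> w i = w m \<Longrightarrow> i = m"
  using w_notin_earlier w_mem by (metis linorder_neqE_nat)

lemma u_black:
  assumes j: "j < length cs" shows "u j \<in> blacks j"
proof -
  have "u j \<noteq> w m" if "j \<le> m" "m < length cs" for m
  proof (cases "m = j")
    case True
    with u_ne_w j show ?thesis by simp
  next
    case False
    with that have "w m \<notin> cs ! j" by (intro w_notin_earlier) auto
    with u_mem[OF j] show ?thesis by metis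
  qed
  with mem_V[OF j u_mem[OF j]] show ?thesis unfolding blacks_def by fastforce
qed

lemma w_white: "j < length cs \<Longrightarrow> w j \<in> V - blacks j"
  unfolding blacks_def using mem_V w_mem by auto

lemma blacks_Suc:
  assumes j: "j < length cs" shows "blacks (Suc j) = insert (w j) (blacks j)"
proof -
  have "{j..<length cs} = insert j {Suc j..<length cs}" using j by auto
  moreover have "w j \<notin> w ` {Suc j..<length cs}" using w_inj j by fastforce
  ultimately show ?thesis unfolding blacks_def using mem_V[OF j w_mem[OF j]] by auto
qed

lemma white_neighbour_unique:
  assumes j: "j < length cs" and x: "x \<in> V - blacks j" and "E (u j) x"
  shows "x = w j"
proof -
  from x obtain m where m: "j \<le> m" "m < length cs" "x = w m" unfolding blacks_def by auto
  from \<open>E (u j) x\<close> covering obtain D where D: "D \<in> K" "u j \<in> D" "x \<in> D"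
    unfolding clique_covering_def by blast
  from u_cliques[OF j D(1,2)] show ?thesis
  proof
    assume "D = cs ! j"
    with m D(3) w_notin_earlier[of j m] show ?thesis by (cases "m = j") auto
  next
    assume "D \<in> set (take j cs)"
    then obtain i where "i < j" "D = cs ! i" by (auto simp: in_set_conv_nth)
    with m D(3) w_notin_earlier[of i m] show ?thesis by simp
  qed
qed

lemma force_step:
  assumes j: "j < length cs" shows "psd_force_step V E (blacks j) (blacks (Suc j))"
proof -
  have "{x \<in> component_in E (V - blacks j) (w j). E (u j) x} = {w j}"
  proof (intro equalityI subsetI)
    fix x assume "x \<in> {x \<in> component_in E (V - blacks j) (w j). E (u j) x}"
    then have "x \<in> V - blacks j" "E (u j) x" unfolding component_in_def by auto
    then show "x \<in> {w j}" using white_neighbour_unique[OF j] by blast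
  next
    fix x assume "x \<in> {w j}"
    moreover have "E (u j) (w j)"
      using clique_nth[OF j] u_mem[OF j] w_mem[OF j] u_ne_w[OF j] unfolding clique_def by blast
    moreover have "w j \<in> component_in E (V - blacks j) (w j)"
      using w_white[OF j] unfolding component_in_def by simp
    ultimately show "x \<in> {x \<in> component_in E (V - blacks j) (w j). E (u j) x}" by simp
  qed
  then show ?thesis
    unfolding psd_force_step_def using u_black[OF j] w_white[OF j] blacks_Suc[OF j] by blast
qed

lemma psd_forcing_set_blacks: "psd_forcing_set V E (blacks 0)"
proof -
  have "(psd_force_step V E)\<^sup>*\<^sup>* (blacks 0) (blacks j)" if "j \<le> length cs" for j
    using that
  proof (induction j)
    case (Suc j)
    then show ?case using force_step[of j] by (simp add: rtranclp.rtrancl_into_rtrancl)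
  qed simp
  from this[of "length cs"] show ?thesis unfolding psd_forcing_set_def by (simp add: blacks_def)
qed

lemma card_blacks: "card (blacks 0) = card V - length cs"
proof -
  have "inj_on w {0..<length cs}" using w_inj by (auto intro: inj_onI)
  then have "card (w ` {0..<length cs}) = length cs" by (simp add: card_image)
  moreover have "w ` {0..<length cs} \<subseteq> V" using mem_V w_mem by auto
  ultimately show ?thesis unfolding blacks_def by (simp add: card_Diff_subset)
qed

end

lemma psd_forcing_set_of_placement_order:
  assumes cov: "clique_covering V E K" and "distinct cs" and "set cs = K"
    and placeable: "\<forall>i<length cs. placeable K (set (take i cs)) (cs ! i)"
  shows "\<exists>B. psd_forcing_set V E B \<and> card B = card V - card K"
proof -
  from placeable obtain u w where "\<forall>i<length cs. u i \<in> cs ! i \<and> w i \<in> cs ! i \<and> u i \<noteq> w i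
      \<and> w i \<notin> \<Union>(set (take i cs)) \<and> (\<forall>D\<in>K. u i \<in> D \<longrightarrow> D = cs ! i \<or> D \<in> set (take i cs))"
    unfolding placeable_def by metis
  then interpret placement_chain V E K cs u w
    using cov \<open>set cs = K\<close> by unfold_locales auto
  show ?thesis
    using psd_forcing_set_blacks card_blacks distinct_card[OF \<open>distinct cs\<close>] \<open>set cs = K\<close> by metis
qed

text \<open>\<open>adj\<close> abstracts the intersection graph of the cliques, \<open>N\<close> the cliques without a private
  vertex.\<close>

locale short_cycle_graph =
  fixes K :: "'v set" and adj :: "'v \<Rightarrow> 'v \<Rightarrow> bool" and N :: "'v set"
  assumes finite_K: "finite K"
    and adj_in: "adj x y \<Longrightarrow> x \<in> K \<and> y \<in> K"
    and adj_sym: "adj x y \<Longrightarrow> adj y x"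
    and adj_irrefl: "\<not> adj x x"
    and no_long_cycle:
      "distinct zs \<Longrightarrow> 4 \<le> length zs \<Longrightarrow> successively adj zs \<Longrightarrow> adj (last zs) (hd zs) \<Longrightarrow> False"
    and N_two_neighbours: "c \<in> N \<Longrightarrow> \<exists>x y. adj c x \<and> adj c y \<and> x \<noteq> y"
    and N_triangle: "c \<in> N \<Longrightarrow> adj c y \<Longrightarrow> adj y x \<Longrightarrow> x \<noteq> c \<Longrightarrow> \<exists>z. adj c z \<and> z \<noteq> x \<and> z \<noteq> y"
begin

definition adj_on :: "'v set \<Rightarrow> 'v \<Rightarrow> 'v \<Rightarrow> bool" where
  "adj_on S x y \<longleftrightarrow> x \<in> S \<and> y \<in> S \<and> adj x y"

definition path_convex :: "'v set \<Rightarrow> bool" where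
  "path_convex S \<longleftrightarrow> (\<forall>a\<in>S. \<forall>b\<in>S. adj\<^sup>*\<^sup>* a b \<longrightarrow> (adj_on S)\<^sup>*\<^sup>* a b)"

text \<open>\<open>S\<close> is the set of nodes placed so far by the greedy search; path convexity lets
  \<open>placed_neighbours_eq\<close> close long cycles through \<open>S\<close>.\<close>

definition admissible :: "'v set \<Rightarrow> bool" where
  "admissible S \<longleftrightarrow> S \<subseteq> K \<and> (\<forall>v\<in>N - S. \<exists>e\<in>K - S. adj v e) \<and> path_convex S"

lemma adj_rtranclp_sym: "adj\<^sup>*\<^sup>* a b \<Longrightarrow> adj\<^sup>*\<^sup>* b a"
  by (induction rule: rtranclp_induct) (auto intro: converse_rtranclp_into_rtranclp adj_sym)

lemma adj_on_rtranclp_mono: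
  assumes "S \<subseteq> T" and "(adj_on S)\<^sup>*\<^sup>* a b" shows "(adj_on T)\<^sup>*\<^sup>* a b"
proof -
  from assms(1) have "adj_on S \<le> adj_on T" by (auto simp: adj_on_def)
  with assms(2) show ?thesis by (metis rtranclp_mono predicate2D)
qed

lemma path_convex_insert_neighbour:
  assumes conv: "path_convex S" and s: "s \<in> S" "adj c s"
  shows "path_convex (insert c S)"
  unfolding path_convex_def
proof (intro ballI impI)
  let ?T = "insert c S"
  have detour: "\<exists>x'\<in>S. adj\<^sup>*\<^sup>* x x' \<and> adj\<^sup>*\<^sup>* x' x \<and> (adj_on ?T)\<^sup>*\<^sup>* x x' \<and> (adj_on ?T)\<^sup>*\<^sup>* x' x"
    if "x \<in> ?T" for x
  proof (cases "x = c")
    case True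
    with s adj_sym show ?thesis by (intro bexI[of _ s]) (auto simp: adj_on_def)
  next
    case False
    with that show ?thesis by auto
  qed
  fix a b assume "a \<in> ?T" "b \<in> ?T" and ab: "adj\<^sup>*\<^sup>* a b"
  then obtain a' b' where a': "a' \<in> S" "adj\<^sup>*\<^sup>* a' a" "(adj_on ?T)\<^sup>*\<^sup>* a a'"
    and b': "b' \<in> S" "adj\<^sup>*\<^sup>* b b'" "(adj_on ?T)\<^sup>*\<^sup>* b' b"
    using detour by meson
  from a'(2) ab b'(2) have "adj\<^sup>*\<^sup>* a' b'" by (meson rtranclp_trans)
  with conv a'(1) b'(1) have "(adj_on S)\<^sup>*\<^sup>* a' b'" unfolding path_convex_def by blast
  then have "(adj_on ?T)\<^sup>*\<^sup>* a' b'" by (rule adj_on_rtranclp_mono[rotated]) blast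
  with a'(3) b'(3) show "(adj_on ?T)\<^sup>*\<^sup>* a b" by (meson rtranclp_trans)
qed

lemma path_convex_insert_isolated:
  assumes conv: "path_convex S" and closed: "\<And>x y. x \<in> S \<Longrightarrow> adj x y \<Longrightarrow> y \<in> S"
  shows "path_convex (insert r S)"
  unfolding path_convex_def
proof (intro ballI impI)
  fix a b assume a: "a \<in> insert r S" and b: "b \<in> insert r S" and ab: "adj\<^sup>*\<^sup>* a b"
  have "a \<in> S \<longleftrightarrow> b \<in> S"
    using rtranclp_exit_step[OF ab] rtranclp_exit_step[OF adj_rtranclp_sym[OF ab]] closed by blast
  then consider "a \<in> S" "b \<in> S" | "a = r" "b = r" using a b by blast
  then show "(adj_on (insert r S))\<^sup>*\<^sup>* a b"
  proof cases
    case 1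
    with conv ab have "(adj_on S)\<^sup>*\<^sup>* a b" unfolding path_convex_def by blast
    then show ?thesis by (rule adj_on_rtranclp_mono[rotated]) blast
  qed simp
qed

lemma placed_neighbours_eq:
  assumes adm: "admissible S" and v: "v \<in> K - S" and c: "c \<in> K - S" and "adj v c"
    and a: "a \<in> S" "adj v a" and b: "b \<in> S" "adj c b"
  shows "a = b"
proof (rule ccontr)
  assume "a \<noteq> b"
  from \<open>adj v a\<close> \<open>adj v c\<close> \<open>adj c b\<close> have "adj\<^sup>*\<^sup>* a b"
    by (meson adj_sym converse_rtranclp_into_rtranclp r_into_rtranclp)
  with adm a b have "(adj_on S)\<^sup>*\<^sup>* a b" unfolding admissible_def path_convex_def by blast
  then obtain xs where path: "rtrancl_path (adj_on S) a xs b" and "distinct (a # xs)"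
    by (metis rtranclp_eq_rtrancl_path rtrancl_path_distinct)
  have "set xs \<subseteq> S" using rtrancl_path_Range[OF path] by (auto simp: adj_on_def Rangep.simps)
  from rtrancl_path_successively[OF path] have "successively adj (a # xs)" "last (a # xs) = b"
    by (auto elim: successively_mono simp: adj_on_def)
  from path \<open>a \<noteq> b\<close> have "xs \<noteq> []" by (auto elim: rtrancl_path.cases)
  show False
  proof (rule no_long_cycle[of "v # (a # xs) @ [c]"])
    show "distinct (v # (a # xs) @ [c])"
      using \<open>distinct (a # xs)\<close> \<open>set xs \<subseteq> S\<close> a v c \<open>adj v c\<close> adj_irrefl by auto
    show "4 \<le> length (v # (a # xs) @ [c])" using \<open>xs \<noteq> []\<close> by (cases xs) auto
    show "successively adj (v # (a # xs) @ [c])"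
      using \<open>successively adj (a # xs)\<close> \<open>last (a # xs) = b\<close> \<open>xs \<noteq> []\<close> \<open>adj v a\<close> \<open>adj c b\<close> adj_sym
      by (auto simp: successively_append_iff successively_Cons)
    show "adj (last (v # (a # xs) @ [c])) (hd (v # (a # xs) @ [c]))"
      using \<open>adj v c\<close> adj_sym by simp
  qed
qed

lemma admissible_insert_neighbour:
  assumes adm: "admissible S" and c: "c \<in> K - S" and s: "s \<in> S" "adj c s"
  shows "admissible (insert c S)"
proof -
  have "\<exists>e\<in>K - insert c S. adj v e" if v: "v \<in> N - insert c S" for v
  proof (rule ccontr)
    assume no_other: "\<not> ?thesis"
    from adm v obtain e where "e \<in> K - S" "adj v e" unfolding admissible_def by blast
    with no_other have "adj v c" by blast
    from v N_two_neighbours adj_in have "v \<in> K - S" by blast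
    \<comment> \<open>the only neighbours of \<open>v\<close> are \<open>c\<close> and \<open>s\<close>: a triangle excluded by \<open>N_triangle\<close>\<close>
    have "z = c \<or> z = s" if "adj v z" for z
    proof (cases "z \<in> S")
      case True
      with placed_neighbours_eq[OF adm \<open>v \<in> K - S\<close> c \<open>adj v c\<close>] that s show ?thesis by blast
    next
      case False
      with no_other that adj_in show ?thesis by blast
    qed
    moreover from v s have "s \<noteq> v" by blast
    with N_triangle[of v c s] v \<open>adj v c\<close> s(2) obtain z where "adj v z" "z \<noteq> s" "z \<noteq> c" by blast
    ultimately show False by blast
  qed
  with adm c s show ?thesis unfolding admissible_def by (auto intro: path_convex_insert_neighbour)
qed

lemma admissible_insert_isolated:
  assumes adm: "admissible S" and r: "r \<in> K - S" and closed: "\<And>x y. x \<in> S \<Longrightarrow> adj x y \<Longrightarrow> y \<in> S"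
  shows "admissible (insert r S)"
proof -
  have "\<exists>e\<in>K - insert r S. adj v e" if v: "v \<in> N - insert r S" for v
  proof -
    from v N_two_neighbours obtain x y where "adj v x" "adj v y" "x \<noteq> y" by blast
    moreover from v closed adj_sym have "x \<notin> S" "y \<notin> S" if "adj v x" "adj v y" for x y
      using that by blast+
    ultimately show ?thesis using adj_in by blast
  qed
  with adm r closed show ?thesis
    unfolding admissible_def by (auto intro: path_convex_insert_isolated)
qed

lemma admissible_insert:
  assumes adm: "admissible S" and r: "r \<in> K - S"
  obtains c where "c \<in> K - S" "admissible (insert c S)" "c = r \<or> (\<exists>s\<in>S. adj c s)"
proof (cases "\<exists>c\<in>K - S. \<exists>s\<in>S. adj c s")
  case True
  then obtain c s where "c \<in> K - S" "s \<in> S" "adj c s" by blast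
  with admissible_insert_neighbour[OF adm] that show ?thesis by blast
next
  case False
  then have "y \<in> S" if "x \<in> S" "adj x y" for x y
    using that adj_in adj_sym by blast
  with admissible_insert_isolated[OF adm r] r that show ?thesis by blast
qed

lemma admissible_all_placed:
  assumes "admissible S" and "K - S \<subseteq> N"
  shows "K \<subseteq> S"
  using assms
proof (induction "card (K - S)" arbitrary: S rule: less_induct)
  case less
  show ?case
  proof (rule ccontr)
    assume "\<not> K \<subseteq> S"
    then obtain r where "r \<in> K - S" by blast
    with admissible_insert[OF less.prems(1)] obtain c where c: "c \<in> K - S" "admissible (insert c S)"
      by metis
    from c(1) finite_K have "card (K - insert c S) < card (K - S)" by (intro psubset_card_mono) auto
    with less.hyps c(2) less.prems(2) have "K \<subseteq> insert c S" by blast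
    moreover from less.prems c(1) obtain e where "e \<in> K - S" "adj c e"
      unfolding admissible_def by blast
    ultimately show False using adj_irrefl by blast
  qed
qed

definition flanked :: "'v set \<Rightarrow> 'v list \<Rightarrow> bool" where
  "flanked S cs \<longleftrightarrow> (\<forall>i<length cs. cs ! i \<in> N \<longrightarrow>
    (\<exists>s\<in>S \<union> set (take i cs). adj (cs ! i) s) \<and> (\<exists>e\<in>set (drop (Suc i) cs). adj (cs ! i) e))"

lemma flanked_Cons:
  "flanked S (c # cs) \<longleftrightarrow>
    (c \<in> N \<longrightarrow> (\<exists>s\<in>S. adj c s) \<and> (\<exists>e\<in>set cs. adj c e)) \<and> flanked (insert c S) cs"
  unfolding flanked_def by (simp add: All_less_Suc2)

lemma flanked_order_from:
  assumes "admissible S"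
  shows "\<exists>cs. distinct cs \<and> set cs = K - S \<and> flanked S cs"
  using assms
proof (induction "card (K - S)" arbitrary: S rule: less_induct)
  case less
  show ?case
  proof (cases "K \<subseteq> S")
    case True
    then show ?thesis by (intro exI[of _ "[]"]) (auto simp: flanked_def)
  next
    case False
    with admissible_all_placed[OF less.prems] obtain r where r: "r \<in> K - S" "r \<notin> N" by blast
    with admissible_insert[OF less.prems r(1)] obtain c where c: "c \<in> K - S" "admissible (insert c S)"
      and first: "c \<in> N \<Longrightarrow> \<exists>s\<in>S. adj c s" by metis
    from c(1) finite_K have "card (K - insert c S) < card (K - S)" by (intro psubset_card_mono) auto
    with less.hyps c(2) obtain cs where cs: "distinct cs" "set cs = K - insert c S" "flanked (insert c S) cs"
      by blast
    have later: "\<exists>e\<in>set cs. adj c e" if "c \<in> N"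
    proof -
      from less.prems c(1) that obtain e where "e \<in> K - S" "adj c e" unfolding admissible_def by blast
      with cs(2) adj_irrefl show ?thesis by blast
    qed
    with cs c(1) first show ?thesis by (intro exI[of _ "c # cs"]) (auto simp: flanked_Cons)
  qed
qed

lemma flanked_order: "\<exists>cs. distinct cs \<and> set cs = K \<and> flanked {} cs"
proof -
  have "admissible {}"
    unfolding admissible_def path_convex_def using N_two_neighbours adj_in by fastforce
  from flanked_order_from[OF this] show ?thesis by simp
qed

end

lemma Suc_mod_if: "i < (k::nat) \<Longrightarrow> Suc i mod k = (if Suc i = k then 0 else Suc i)"
  by (cases "Suc i = k") simp_all

lemma cyclic_successor_facts:
  fixes i j k :: nat
  assumes "i < k" "j < k" "4 \<le> k"
  shows "Suc i mod k < k" and "Suc i mod k \<noteq> i"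
    and "Suc i mod k = Suc j mod k \<longleftrightarrow> i = j"
    and "\<not> (i = Suc j mod k \<and> j = Suc i mod k)"
  using assms by (simp_all add: Suc_mod_if[OF assms(1)] Suc_mod_if[OF assms(2)] split: if_splits)

text \<open>The cycle of cliques need not be induced: the pairs {z_i, z_(i+1)} always form an induced
  cycle of the compressed cliques graph.\<close>

lemma has_induced_cycle_ccgI:
  assumes d: "distinct zs" and l: "4 \<le> length zs" and s: "set zs \<subseteq> K"
    and adj: "\<forall>i<length zs. zs ! i \<inter> zs ! (Suc i mod length zs) \<noteq> {}"
  shows "has_induced_cycle (ccg_vertices K) (ccg_edge K) (length zs)"
proof -
  define k where "k = length zs"
  define ys where "ys = map (\<lambda>i. {zs ! i, zs ! (Suc i mod k)}) [0..<k]"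
  have k4: "4 \<le> k" using l k_def by simp
  have ys_nth: "i < k \<Longrightarrow> ys ! i = {zs ! i, zs ! (Suc i mod k)}" for i by (simp add: ys_def)
  have zs_eq: "a < k \<Longrightarrow> b < k \<Longrightarrow> zs ! a = zs ! b \<longleftrightarrow> a = b" for a b
    using d k_def nth_eq_iff_index_eq by blast
  have zs_in: "a < k \<Longrightarrow> zs ! a \<in> K" for a using s k_def nth_mem by blast
  have vertex: "ys ! i \<in> ccg_vertices K" if "i < k" for i
  proof -
    have "zs ! i \<noteq> zs ! (Suc i mod k)"
      using zs_eq cyclic_successor_facts[OF that that k4] that by metis
    then have "cpart K (zs ! i) (zs ! (Suc i mod k)) \<noteq> {}"
      using adj that k_def by (simp add: cpart_def)
    then show ?thesis unfolding ccg_vertices_def ys_nth[OF that]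
      using zs_in that cyclic_successor_facts[OF that that k4] by blast
  qed
  have meet: "ys ! i \<inter> ys ! j \<noteq> {} \<longleftrightarrow> i = j \<or> j = Suc i mod k \<or> i = Suc j mod k"
    if "i < k" "j < k" for i j
  proof -
    have "ys ! i \<inter> ys ! j \<noteq> {} \<longleftrightarrow> zs ! i = zs ! j \<or> zs ! i = zs ! (Suc j mod k)
        \<or> zs ! (Suc i mod k) = zs ! j \<or> zs ! (Suc i mod k) = zs ! (Suc j mod k)"
      using ys_nth that by auto
    also have "\<dots> \<longleftrightarrow> i = j \<or> i = Suc j mod k \<or> Suc i mod k = j \<or> Suc i mod k = Suc j mod k"
      using zs_eq that cyclic_successor_facts[OF that k4] by simp
    also have "\<dots> \<longleftrightarrow> i = j \<or> j = Suc i mod k \<or> i = Suc j mod k"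
      using cyclic_successor_facts[OF that k4] by auto
    finally show ?thesis .
  qed
  have ys_distinct: "distinct ys"
  proof (subst distinct_conv_nth, intro allI impI)
    fix i j assume ij: "i < length ys" "j < length ys" "i \<noteq> j"
    then have ij': "i < k" "j < k" by (auto simp: ys_def)
    show "ys ! i \<noteq> ys ! j"
    proof
      assume eq: "ys ! i = ys ! j"
      have ne: "zs ! i \<noteq> zs ! j" using zs_eq ij' ij(3) by simp
      have "zs ! i \<in> ys ! j" using eq ys_nth ij' by auto
      then have "zs ! i = zs ! (Suc j mod k)" using ne ys_nth ij' by auto
      then have i_succ: "i = Suc j mod k"
        using zs_eq ij' cyclic_successor_facts[OF ij'(2) ij'(2) k4] by simp
      have "zs ! j \<in> ys ! i" using eq ys_nth ij' by auto
      then have "zs ! j = zs ! (Suc i mod k)" using ne ys_nth ij' by auto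
      then have j_succ: "j = Suc i mod k"
        using zs_eq ij' cyclic_successor_facts[OF ij'(1) ij'(1) k4] by simp
      show False using i_succ j_succ cyclic_successor_facts[OF ij' k4] by blast
    qed
  qed
  show ?thesis unfolding has_induced_cycle_def
  proof (intro exI[of _ ys] conjI allI impI)
    show "length ys = length zs" by (simp add: ys_def k_def)
    show "distinct ys" by (rule ys_distinct)
    show "set ys \<subseteq> ccg_vertices K" using vertex by (auto simp: ys_def in_set_conv_nth)
    fix i j assume "i < length zs" "j < length zs" "i \<noteq> j"
    then have ij: "i < k" "j < k" "i \<noteq> j" by (auto simp: k_def)
    have "length ys = k" by (simp add: ys_def)
    then have "ys ! i \<noteq> ys ! j" using ys_distinct ij nth_eq_iff_index_eq by metis
    then show "ccg_edge K (ys ! i) (ys ! j) = (j = Suc i mod length zs \<or> i = Suc j mod length zs)"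
      unfolding ccg_edge_def using vertex ij meet[OF ij(1,2)] k_def by auto
  qed
qed

locale simple_minmax_covering =
  fixes V :: "'a set" and E :: "'a \<Rightarrow> 'a \<Rightarrow> bool" and K :: "'a set set"
  assumes graph: "graph V E"
    and covering: "clique_covering V E K"
    and maximal: "\<And>C. C \<in> K \<Longrightarrow> maximal_clique V E C"
    and simple: "simple_intersection K"
    and minimum: "\<And>K'. clique_covering V E K' \<Longrightarrow> card K \<le> card K'"
begin

definition meets :: "'a set \<Rightarrow> 'a set \<Rightarrow> bool" where
  "meets C D \<longleftrightarrow> C \<in> K \<and> D \<in> K \<and> C \<noteq> D \<and> C \<inter> D \<noteq> {}"

definition no_private :: "'a set \<Rightarrow> bool" where
  "no_private C \<longleftrightarrow> (\<forall>x\<in>C. \<exists>D\<in>K. D \<noteq> C \<and> x \<in> D)"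

lemma clique_K: "C \<in> K \<Longrightarrow> clique V E C"
  using covering by (simp add: clique_covering_def)

lemma finite_K: "finite K"
  using covering by (simp add: clique_covering_def)

lemma two_le_card:
  assumes C: "C \<in> K" shows "2 \<le> card C"
proof (rule ccontr)
  assume small: "\<not> 2 \<le> card C"
  have "clique_covering V E (K - {C})"
    unfolding clique_covering_def
  proof (intro conjI allI impI ballI)
    show "finite (K - {C})" using finite_K by simp
    show "clique V E D" if "D \<in> K - {C}" for D using that clique_K by simp
    fix x y assume "E x y"
    with covering obtain D where D: "D \<in> K" "x \<in> D" "y \<in> D" unfolding clique_covering_def by blast
    from \<open>E x y\<close> graph have "x \<noteq> y" by (auto simp: graph_def)
    have "finite C" using clique_K[OF C] graph finite_subset by (auto simp: clique_def graph_def)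
    have "D \<noteq> C"
    proof
      assume "D = C"
      with D \<open>x \<noteq> y\<close> \<open>finite C\<close> have "card {x, y} \<le> card C" by (intro card_mono) auto
      with small \<open>x \<noteq> y\<close> show False by simp
    qed
    with D show "\<exists>D\<in>K - {C}. x \<in> D \<and> y \<in> D" by blast
  qed
  then have "card K \<le> card (K - {C})" by (rule minimum)
  moreover have "card (K - {C}) < card K" using C finite_K by (rule card_Diff1_less[rotated])
  ultimately show False by simp
qed

lemma no_private_two_neighbours:
  assumes C: "C \<in> K" "no_private C" shows "\<exists>D1 D2. meets C D1 \<and> meets C D2 \<and> D1 \<noteq> D2"
proof -
  from two_le_card[OF C(1)] obtain x where x: "x \<in> C" by fastforce
  with C obtain D1 where D1: "D1 \<in> K" "D1 \<noteq> C" "x \<in> D1" unfolding no_private_def by blast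
  have "\<not> C \<subseteq> D1"
  proof
    assume "C \<subseteq> D1"
    with maximal[OF C(1)] clique_K[OF D1(1)] have "D1 = C" unfolding maximal_clique_def by blast
    with D1(2) show False ..
  qed
  then obtain y where y: "y \<in> C" "y \<notin> D1" by blast
  with C obtain D2 where D2: "D2 \<in> K" "D2 \<noteq> C" "y \<in> D2" unfolding no_private_def by blast
  from C(1) D1 D2 x y have "meets C D1" "meets C D2" "D1 \<noteq> D2" unfolding meets_def by auto
  then show ?thesis by blast
qed

lemma no_private_triangle:
  assumes c: "c \<in> K" "no_private c" and "meets c y" "meets y x" "x \<noteq> c"
  shows "\<exists>z. meets c z \<and> z \<noteq> x \<and> z \<noteq> y"
proof (rule ccontr)
  assume "\<not> ?thesis"
  with c have "c \<subseteq> y \<union> x" unfolding no_private_def meets_def by blast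
  from assms have K: "y \<in> K" "x \<in> K" "c \<noteq> y" "y \<noteq> x" unfolding meets_def by auto
  from \<open>c \<subseteq> y \<union> x\<close> have "clique V E (c \<union> (y \<inter> x))"
    by (rule clique_union_inter[OF clique_K[OF c(1)] clique_K[OF K(1)] clique_K[OF K(2)]])
  with maximal[OF c(1)] have "y \<inter> x \<subseteq> c" unfolding maximal_clique_def by blast
  moreover from \<open>meets y x\<close> obtain p where "p \<in> y" "p \<in> x" unfolding meets_def by blast
  ultimately show False using simple_intersectionD[OF simple c(1) K(1) K(2)] K \<open>x \<noteq> c\<close> by blast
qed

lemma placeable_if_private:
  assumes C: "C \<in> K" "C \<notin> S" and S: "S \<subseteq> K" and "\<not> no_private C"
  shows "placeable K S C"
proof -
  from \<open>\<not> no_private C\<close> obtain p where p: "p \<in> C" "\<And>D. D \<in> K \<Longrightarrow> p \<in> D \<Longrightarrow> D = C"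
    unfolding no_private_def by blast
  from two_le_card[OF C(1)] have "C \<noteq> {p}" by auto
  with p(1) obtain x where x: "x \<in> C" "x \<noteq> p" by blast
  show ?thesis
  proof (cases "x \<in> \<Union>S")
    case False
    show ?thesis by (rule placeableI[OF p(1) x(1) x(2)[symmetric] False]) (use p(2) in blast)
  next
    case True
    then obtain D0 where D0: "D0 \<in> S" "x \<in> D0" by blast
    have "p \<notin> \<Union>S" using p C S by blast
    moreover have "D = C \<or> D \<in> S" if "D \<in> K" "x \<in> D" for D
      using simple_intersectionD[OF simple C(1) _ that(1) x(1) D0(2) that(2)] D0(1) S C(2) by blast
    ultimately show ?thesis by (rule placeableI[OF x(1) p(1) x(2)])
  qed
qed

lemma placeable_if_flanked:
  assumes C: "C \<in> K" "C \<notin> S" and S: "S \<subseteq> K"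
    and s: "s \<in> S" "meets C s" and e: "e \<notin> S" "meets C e"
  shows "placeable K S C"
proof -
  from s(2) obtain u where u: "u \<in> C" "u \<in> s" unfolding meets_def by blast
  from e(2) obtain w where w: "w \<in> C" "w \<in> e" unfolding meets_def by blast
  from s S have "s \<in> K" "C \<noteq> s" unfolding meets_def by auto
  from e have "e \<in> K" "C \<noteq> e" "s \<noteq> e" using s(1) unfolding meets_def by auto
  note two_cliques = simple_intersectionD[OF simple]
  have "u \<noteq> w"
  proof
    assume "u = w"
    with two_cliques[OF C(1) \<open>s \<in> K\<close> \<open>e \<in> K\<close> u] w(2) have "C = s \<or> C = e \<or> s = e" by simp
    with \<open>C \<noteq> s\<close> \<open>C \<noteq> e\<close> \<open>s \<noteq> e\<close> show False by blast
  qed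
  moreover have "w \<notin> D" if "D \<in> S" for D
  proof
    assume "w \<in> D"
    with two_cliques[OF C(1) \<open>e \<in> K\<close> _ w(1) w(2)] S that have "C = e \<or> C = D \<or> e = D" by blast
    with that C(2) e(1) \<open>C \<noteq> e\<close> show False by blast
  qed
  moreover have "D = C \<or> D \<in> S" if "D \<in> K" "u \<in> D" for D
    using two_cliques[OF C(1) \<open>s \<in> K\<close> that(1) u that(2)] s(1) \<open>C \<noteq> s\<close> by blast
  ultimately show ?thesis by (intro placeableI[OF u(1) w(1)]) blast+
qed

lemma placeable_nth_if_flanked:
  assumes cs: "distinct cs" "set cs = K" and i: "i < length cs"
    and flanked: "no_private (cs ! i) \<Longrightarrow>
      (\<exists>s\<in>set (take i cs). meets (cs ! i) s) \<and> (\<exists>e\<in>set (drop (Suc i) cs). meets (cs ! i) e)"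
  shows "placeable K (set (take i cs)) (cs ! i)"
proof -
  from i cs(1) have "distinct (take i cs @ cs ! i # drop (Suc i) cs)"
    by (simp flip: id_take_nth_drop)
  then have fresh: "cs ! i \<notin> set (take i cs)" and apart: "set (take i cs) \<inter> set (drop (Suc i) cs) = {}"
    by auto
  have "cs ! i \<in> K" "set (take i cs) \<subseteq> K"
    using i cs(2) by (auto dest: in_set_takeD)
  show ?thesis
  proof (cases "no_private (cs ! i)")
    case True
    with flanked obtain s e where s: "s \<in> set (take i cs)" "meets (cs ! i) s"
      and e: "e \<in> set (drop (Suc i) cs)" "meets (cs ! i) e"
      by blast
    from e(1) apart have "e \<notin> set (take i cs)" by blast
    with s e(2) show ?thesis
      by (intro placeable_if_flanked[OF \<open>cs ! i \<in> K\<close> fresh \<open>set (take i cs) \<subseteq> K\<close>])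
  next
    case False
    with \<open>cs ! i \<in> K\<close> fresh \<open>set (take i cs) \<subseteq> K\<close> show ?thesis by (rule placeable_if_private)
  qed
qed

lemma no_long_meets_cycle:
  assumes no_cycle: "\<forall>k\<ge>4. \<not> has_induced_cycle (ccg_vertices K) (ccg_edge K) k"
    and "distinct zs" "4 \<le> length zs" "successively meets zs" "meets (last zs) (hd zs)"
  shows False
proof -
  have cyclic: "meets (zs ! i) (zs ! (Suc i mod length zs))" if "i < length zs" for i
    using successively_cyclic_nth[OF assms(4,5) that] .
  then have "set zs \<subseteq> K" by (auto simp: in_set_conv_nth meets_def)
  moreover have "\<forall>i<length zs. zs ! i \<inter> zs ! (Suc i mod length zs) \<noteq> {}"
    using cyclic by (simp add: meets_def)
  ultimately have "has_induced_cycle (ccg_vertices K) (ccg_edge K) (length zs)"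
    using has_induced_cycle_ccgI assms(2,3) by blast
  with no_cycle assms(3) show False by blast
qed

lemma placement_order_exists:
  assumes no_cycle: "\<forall>k\<ge>4. \<not> has_induced_cycle (ccg_vertices K) (ccg_edge K) k"
  shows "\<exists>cs. distinct cs \<and> set cs = K \<and> (\<forall>i<length cs. placeable K (set (take i cs)) (cs ! i))"
proof -
  interpret short_cycle_graph K meets "{C \<in> K. no_private C}"
  proof
    show "finite K" by (rule finite_K)
    show "meets x y \<Longrightarrow> x \<in> K \<and> y \<in> K" "meets x y \<Longrightarrow> meets y x" "\<not> meets x x" for x y
      unfolding meets_def by auto
    show "False" if "distinct zs" "4 \<le> length zs" "successively meets zs" "meets (last zs) (hd zs)" for zs
      using no_long_meets_cycle[OF no_cycle that] .
    show "\<exists>x y. meets c x \<and> meets c y \<and> x \<noteq> y" if "c \<in> {C \<in> K. no_private C}" for c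
      using no_private_two_neighbours that by blast
    show "\<exists>z. meets c z \<and> z \<noteq> x \<and> z \<noteq> y"
      if "c \<in> {C \<in> K. no_private C}" "meets c y" "meets y x" "x \<noteq> c" for c x y
      using no_private_triangle that by blast
  qed
  obtain cs where cs: "distinct cs" "set cs = K" and "flanked {} cs"
    using flanked_order by blast
  have "placeable K (set (take i cs)) (cs ! i)" if i: "i < length cs" for i
  proof (rule placeable_nth_if_flanked[OF cs i])
    from i cs(2) have "cs ! i \<in> K" by auto
    with \<open>flanked {} cs\<close> i show "(\<exists>s\<in>set (take i cs). meets (cs ! i) s)
        \<and> (\<exists>e\<in>set (drop (Suc i) cs). meets (cs ! i) e)" if "no_private (cs ! i)"
      using that unfolding flanked_def by simp
  qed
  with cs show ?thesis by blast
qed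

end

theorem mainTheorem7:
  fixes V :: "'a set" and E :: "'a \<Rightarrow> 'a \<Rightarrow> bool" and \<K> :: "'a set set"
  assumes "graph V E"
    and "min_max_clique_covering V E \<K>"
    and "simple_intersection \<K>"
    and "\<forall>k\<ge>4. \<not> has_induced_cycle (ccg_vertices \<K>) (ccg_edge \<K>) k"
  shows "Zplus V E = card V - cc V E"
proof -
  from assms(2) have cov: "clique_covering V E \<K>" and card_K: "card \<K> = cc V E"
    and "\<forall>C\<in>\<K>. maximal_clique V E C"
    unfolding min_max_clique_covering_def by auto
  with assms(1,3) cc_le_card interpret simple_minmax_covering V E \<K>
    by unfold_locales auto
  from placement_order_exists[OF assms(4)] obtain cs where
    "distinct cs" "set cs = \<K>" "\<forall>i<length cs. placeable \<K> (set (take i cs)) (cs ! i)"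
    by blast
  with cov obtain B where "psd_forcing_set V E B" "card B = card V - card \<K>"
    using psd_forcing_set_of_placement_order by blast
  moreover have "card V - card \<K> \<le> card B'" if "psd_forcing_set V E B'" for B'
    using card_le_forcing_set_plus_covering[OF cov that] by simp
  ultimately show ?thesis using card_K by (metis Zplus_eqI)
qed

end
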